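(* For any subgroup $\mathcal M\le\mathcal P_n$, $$\mathrm{rank}\,\overline D^{(\mathcal M)}=\mathrm{rank}\,\overline D'^{(\mathcal M)}=\mathrm{rank}\,D^{(\mathcal M)}=\mathrm{rank}\,D'^{(\mathcal M)}=|\mathcal C^{*(\mathcal M)}|,$$ where $\mathcal C^{*(\mathcal M)}$ is the set of nontrivial syndrome classes of $\mathcal E_\Gamma$ with respect to $\mathcal M$.
   Context: $\mathcal P_n$ is the $n$-qubit Pauli group without phases; $\langle A,B\rangle=0$ if $A,B$ commute and $1$ otherwise. $\Gamma$ is a finite collection of supports $\gamma\subseteq\{1,\dots,n\}$; $\mathcal E_\gamma$ is the set of non-identity Paulis supported in $\gamma$; $\mathcal E_\Gamma$ is the disjoint union of the $\mathcal E_\gamma$ (the same operator from different supports counted separately) and $\overline{\mathcal E}_\Gamma=\bigcup_\gamma\mathcal E_\gamma$ as a set of operators. For a set $\mathcal H\subseteq\mathcal P_n$, the syndrome of $e$ is $(\langle e,h\rangle)_{h\in\mathcal H}$; syndrome classes are the equivalence classes of errors with equal syndrome; the class with all-zero syndrome is trivial, the others form $\mathcal C^{*(\mathcal H)}$. $D^{(\mathcal H)}$ is the $|\mathcal H|\times|\mathcal E_\Gamma|$ matrix with entries $\langle h,e\rangle$, and $\overline D^{(\mathcal H)}$ the analogous $|\mathcal H|\times|\overline{\mathcal E}_\Gamma|$ matrix. The reduced matrix $D'^{(\mathcal H)}$ is the $|\mathcal H|\times|\mathcal C^{*(\mathcal H)}|$ matrix keeping one column (a representative) for each nontrivial syndrome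 class of $\mathcal E_\Gamma$; $\overline D'^{(\mathcal H)}$ is defined likewise using the nontrivial syndrome classes of $\overline{\mathcal E}_\Gamma$. *)

theory Defs
  imports Main "Jordan_Normal_Form.DL_Rank"
begin

datatype pauli1 = PI | PX | PY | PZ

text \<open>Single-qubit product, phases dropped.\<close>
fun mult1 :: "pauli1 \<Rightarrow> pauli1 \<Rightarrow> pauli1" where
  "mult1 PI b = b"
| "mult1 a PI = a"
| "mult1 PX PX = PI" | "mult1 PY PY = PI" | "mult1 PZ PZ = PI"
| "mult1 PX PY = PZ" | "mult1 PY PX = PZ"
| "mult1 PY PZ = PX" | "mult1 PZ PY = PX"
| "mult1 PX PZ = PY" | "mult1 PZ PX = PY"

definition anticomm1 :: "pauli1 \<Rightarrow> pauli1 \<Rightarrow> bool" where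
  "anticomm1 a b \<longleftrightarrow> a \<noteq> PI \<and> b \<noteq> PI \<and> a \<noteq> b"

type_synonym pauli = "nat \<Rightarrow> pauli1"

definition pauli_group :: "nat \<Rightarrow> pauli set" where
  "pauli_group n = {P. \<forall>i. P i \<noteq> PI \<longrightarrow> i \<in> {1..n}}"

definition pid :: pauli where "pid = (\<lambda>_. PI)"

definition pmult :: "pauli \<Rightarrow> pauli \<Rightarrow> pauli" where
  "pmult P Q = (\<lambda>i. mult1 (P i) (Q i))"

text \<open>Symplectic form: True (=1) iff the operators anticommute.\<close>
definition symp :: "pauli \<Rightarrow> pauli \<Rightarrow> bool" where
  "symp A B \<longleftrightarrow> odd (card {i. anticomm1 (A i) (B i)})"

definition pauli_subgroup :: "nat \<Rightarrow> pauli set \<Rightarrow> bool" where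
  "pauli_subgroup n M \<longleftrightarrow> M \<subseteq> pauli_group n \<and> pid \<in> M \<and>
     (\<forall>A\<in>M. \<forall>B\<in>M. pmult A B \<in> M)"

definition E_sup :: "nat \<Rightarrow> nat set \<Rightarrow> pauli set" where
  "E_sup n \<gamma> = {P \<in> pauli_group n. P \<noteq> pid \<and> (\<forall>i. i \<notin> \<gamma> \<longrightarrow> P i = PI)}"

text \<open>E_Gamma: disjoint union, elements tagged with their support.\<close>
definition E_Gamma :: "nat \<Rightarrow> nat set set \<Rightarrow> (nat set \<times> pauli) set" where
  "E_Gamma n \<Gamma> = Sigma \<Gamma> (E_sup n)"

definition Ebar_Gamma :: "nat \<Rightarrow> nat set set \<Rightarrow> pauli set" where
  "Ebar_Gamma n \<Gamma> = (\<Union>\<gamma>\<in>\<Gamma>. E_sup n \<gamma>)"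

definition syndrome :: "pauli set \<Rightarrow> pauli \<Rightarrow> (pauli \<Rightarrow> bool)" where
  "syndrome H e = (\<lambda>h\<in>H. symp e h)"

text \<open>Syndrome classes of a set X of errors; op maps an element of X to its operator.\<close>
definition syndrome_classes :: "pauli set \<Rightarrow> 'e set \<Rightarrow> ('e \<Rightarrow> pauli) \<Rightarrow> 'e set set" where
  "syndrome_classes H X op =
     (\<lambda>x. {y \<in> X. syndrome H (op y) = syndrome H (op x)}) ` X"

definition nontrivial_classes :: "pauli set \<Rightarrow> 'e set \<Rightarrow> ('e \<Rightarrow> pauli) \<Rightarrow> 'e set set" where
  "nontrivial_classes H X op =
     {c \<in> syndrome_classes H X op. \<forall>x\<in>c. syndrome H (op x) \<noteq> (\<lambda>h\<in>H. False)}"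

definition enum_set :: "'a set \<Rightarrow> 'a list" where
  "enum_set S = (SOME xs. distinct xs \<and> set xs = S)"

definition index_mat :: "'r set \<Rightarrow> 'c set \<Rightarrow> ('r \<Rightarrow> 'c \<Rightarrow> real) \<Rightarrow> real mat" where
  "index_mat R C f = mat (card R) (card C) (\<lambda>(i, j). f (enum_set R ! i) (enum_set C ! j))"

definition mat_rank :: "real mat \<Rightarrow> nat" where
  "mat_rank A = vec_space.rank (dim_row A) A"

definition synd_mat :: "pauli set \<Rightarrow> 'e set \<Rightarrow> ('e \<Rightarrow> pauli) \<Rightarrow> real mat" where
  "synd_mat H X op = index_mat H X (\<lambda>h x. of_bool (symp h (op x)))"

definition red_mat :: "pauli set \<Rightarrow> 'e set \<Rightarrow> ('e \<Rightarrow> pauli) \<Rightarrow> real mat" where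
  "red_mat H X op = index_mat H (nontrivial_classes H X op)
      (\<lambda>h c. of_bool (symp h (op (SOME x. x \<in> c))))"

end

theory Submission
  imports Defs
begin

text \<open>
  Column x of a syndrome matrix is the 0/1 vector of the syndrome of x, so every one of the four
  matrices has exactly the distinct nonzero syndromes as its set of nonzero columns, and these are
  in bijection with the nontrivial syndrome classes. It remains to show that distinct nonzero
  syndrome vectors over a subgroup M are linearly independent over the reals. For fixed e the map
  h \<mapsto> (-1)^<h,e> is a character of M, so the vectors of signs satisfy the orthogonality relations
  of characters: two of them are orthogonal unless the syndromes agree, and each is orthogonal to
  the all-ones vector unless the syndrome is trivial. Since a 0/1 column s equals (1 - \<sigma>)/2 for its
  sign vector \<sigma>, pairing a vanishing combination of columns with \<sigma> isolates each coefficient.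
\<close>

lemma anticomm1_mult1: "anticomm1 (mult1 a b) c = (anticomm1 a c \<noteq> anticomm1 b c)"
  by (cases a; cases b; cases c) (auto simp: anticomm1_def)

lemma anticomm1_commute: "anticomm1 a b = anticomm1 b a"
  by (auto simp: anticomm1_def)

lemma mult1_cancel_left: "mult1 a (mult1 a b) = b"
  by (cases a; cases b) auto

lemma pmult_cancel_left: "pmult g (pmult g h) = h"
  by (simp add: pmult_def mult1_cancel_left)

lemma symp_commute: "symp A B = symp B A"
  unfolding symp_def by (simp add: anticomm1_commute)

lemma not_symp_pid: "\<not> symp e pid"
  by (simp add: symp_def pid_def anticomm1_def)

lemma card_symdiff_add:
  assumes "finite A" "finite B"
  shows "card ((A - B) \<union> (B - A)) + 2 * card (A \<inter> B) = card A + card B"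
proof -
  have "card ((A - B) \<union> (B - A)) = card ((A \<union> B) - (A \<inter> B))"
    by (rule arg_cong[where f = card]) blast
  also have "\<dots> = card (A \<union> B) - card (A \<inter> B)"
    using assms by (intro card_Diff_subset) auto
  finally have "card ((A - B) \<union> (B - A)) = card (A \<union> B) - card (A \<inter> B)" .
  moreover have "card (A \<inter> B) \<le> card (A \<union> B)"
    using assms by (intro card_mono) auto
  ultimately show ?thesis
    using card_Un_Int[OF assms] by linarith
qed

lemma symp_pmult:
  assumes "A \<in> pauli_group n" "B \<in> pauli_group n"
  shows "symp (pmult A B) e = (symp A e \<noteq> symp B e)"
proof -
  define SA where "SA = {i. anticomm1 (A i) (e i)}"
  define SB where "SB = {i. anticomm1 (B i) (e i)}"
  have "SA \<subseteq> {1..n}" "SB \<subseteq> {1..n}"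
    using assms by (auto simp: SA_def SB_def pauli_group_def anticomm1_def)
  then have "finite SA" "finite SB"
    by (auto intro: finite_subset)
  moreover have "{i. anticomm1 (pmult A B i) (e i)} = (SA - SB) \<union> (SB - SA)"
    by (auto simp: SA_def SB_def pmult_def anticomm1_mult1)
  ultimately show ?thesis
    using card_symdiff_add[of SA SB] unfolding symp_def SA_def[symmetric] SB_def[symmetric]
    by (metis even_add even_mult_iff even_numeral)
qed

lemma finite_pauli_group: "finite (pauli_group n)"
proof -
  let ?F = "{f. \<forall>i. (i \<in> {1..n} \<longrightarrow> f i \<in> (UNIV :: pauli1 set)) \<and> (i \<notin> {1..n} \<longrightarrow> f i = PI)}"
  have "(UNIV :: pauli1 set) = {PI, PX, PY, PZ}"
    using pauli1.exhaust by blast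
  then have "finite (UNIV :: pauli1 set)"
    by (metis finite.emptyI finite_insert)
  then have "finite ?F"
    by (intro finite_set_of_finite_funs) simp_all
  moreover have "pauli_group n \<subseteq> ?F"
    by (auto simp: pauli_group_def)
  ultimately show ?thesis
    by (rule finite_subset[rotated])
qed

lemma finite_pauli_subgroup: "pauli_subgroup n M \<Longrightarrow> finite M"
  using finite_pauli_group finite_subset by (auto simp: pauli_subgroup_def)

definition bool_sign :: "bool \<Rightarrow> real" where
  "bool_sign b = 1 - 2 * of_bool b"

lemma bool_sign_mult: "bool_sign b * bool_sign c = bool_sign (b \<noteq> c)"
  by (simp add: bool_sign_def)

lemma bool_sign_square: "bool_sign b * bool_sign b = 1"
  by (cases b) (simp_all add: bool_sign_def)

lemma sum_bool_sign_eq_0_if_nontrivial_hom: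
  assumes M: "pauli_subgroup n M"
    and hom: "\<And>g h. g \<in> M \<Longrightarrow> h \<in> M \<Longrightarrow> \<tau> (pmult g h) = (\<tau> g \<noteq> \<tau> h)"
    and g: "g \<in> M" "\<tau> g"
  shows "(\<Sum>h\<in>M. bool_sign (\<tau> h)) = 0"
proof -
  have "pmult g \<in> M \<rightarrow> M"
    using M g by (auto simp: pauli_subgroup_def)
  then have translation: "bij_betw (pmult g) M M"
    by (intro bij_betwI[where g = "pmult g"]) (auto simp: pmult_cancel_left)
  have "(\<Sum>h\<in>M. bool_sign (\<tau> h)) = (\<Sum>h\<in>M. bool_sign (\<tau> (pmult g h)))"
    using sum.reindex_bij_betw[OF translation, of "\<lambda>h. bool_sign (\<tau> h)"] by simp
  also have "\<dots> = (\<Sum>h\<in>M. - bool_sign (\<tau> h))"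
    by (rule sum.cong) (auto simp: hom g bool_sign_def)
  finally show ?thesis
    by (simp add: sum_negf)
qed

lemma sum_bool_sign_symp_orthogonal:
  assumes M: "pauli_subgroup n M"
  shows "(\<Sum>h\<in>M. bool_sign (symp h e) * bool_sign (symp h e')) =
    (if \<forall>h\<in>M. symp h e = symp h e' then real (card M) else 0)"
proof (cases "\<forall>h\<in>M. symp h e = symp h e'")
  case True
  then show ?thesis
    by (simp add: bool_sign_square)
next
  case False
  then obtain g where g: "g \<in> M" "symp g e \<noteq> symp g e'"
    by blast
  have "symp (pmult g h) e \<noteq> symp (pmult g h) e' \<longleftrightarrow>
      (symp g e \<noteq> symp g e') \<noteq> (symp h e \<noteq> symp h e')" if "g \<in> M" "h \<in> M" for g h
    using M that symp_pmult[of g n h] by (auto simp: pauli_subgroup_def)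
  then have "(\<Sum>h\<in>M. bool_sign (symp h e \<noteq> symp h e')) = 0"
    by (rule sum_bool_sign_eq_0_if_nontrivial_hom[where \<tau> = "\<lambda>h. symp h e \<noteq> symp h e'", OF M _ g])
  then show ?thesis
    unfolding if_not_P[OF False] by (simp add: bool_sign_mult)
qed

lemma coeff_eq_0_if_syndrome_combination_eq_0:
  fixes err :: "'v \<Rightarrow> pauli" and a :: "'v \<Rightarrow> real"
  assumes M: "pauli_subgroup n M" and V: "finite V"
    and distinct: "\<And>v w. v \<in> V \<Longrightarrow> w \<in> V \<Longrightarrow> v \<noteq> w \<Longrightarrow> \<exists>h\<in>M. symp h (err v) \<noteq> symp h (err w)"
    and nontrivial: "\<And>v. v \<in> V \<Longrightarrow> \<exists>h\<in>M. symp h (err v)"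
    and comb: "\<And>h. h \<in> M \<Longrightarrow> (\<Sum>v\<in>V. a v * of_bool (symp h (err v))) = 0"
    and w: "w \<in> V"
  shows "a w = 0"
proof -
  let ?\<sigma> = "\<lambda>v h. bool_sign (symp h (err v))"
  have comb_sign: "(\<Sum>v\<in>V. a v * ?\<sigma> v h) = sum a V" if "h \<in> M" for h
  proof -
    have "(\<Sum>v\<in>V. a v * ?\<sigma> v h) = sum a V - 2 * (\<Sum>v\<in>V. a v * of_bool (symp h (err v)))"
      by (simp add: bool_sign_def algebra_simps sum_subtractf sum_distrib_left)
    then show ?thesis
      using comb[OF that] by simp
  qed
  have "(\<Sum>h\<in>M. ?\<sigma> w h) = (\<Sum>h\<in>M. ?\<sigma> w h * bool_sign (symp h pid))"
    by (simp add: not_symp_pid bool_sign_def)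
  also have "\<dots> = 0"
    using nontrivial[OF w] sum_bool_sign_symp_orthogonal[OF M, of "err w" pid]
    by (auto simp: not_symp_pid)
  finally have sum_sign_w: "(\<Sum>h\<in>M. ?\<sigma> w h) = 0" .
  have "a w * real (card M) = (\<Sum>v\<in>V. if v = w then a w * real (card M) else 0)"
    using V w by simp
  also have "\<dots> = (\<Sum>v\<in>V. a v * (\<Sum>h\<in>M. ?\<sigma> v h * ?\<sigma> w h))"
    using distinct w by (intro sum.cong) (auto simp: sum_bool_sign_symp_orthogonal[OF M])
  also have "\<dots> = (\<Sum>h\<in>M. ?\<sigma> w h * (\<Sum>v\<in>V. a v * ?\<sigma> v h))"
    by (simp add: sum_distrib_left sum.swap[of _ V M] algebra_simps)
  also have "\<dots> = sum a V * (\<Sum>h\<in>M. ?\<sigma> w h)"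
    by (simp add: comb_sign sum_distrib_left mult.commute)
  finally have "a w * real (card M) = 0"
    by (simp add: sum_sign_w)
  moreover have "card M > 0"
    using M finite_pauli_subgroup[OF M] by (auto simp: pauli_subgroup_def card_gt_0_iff)
  ultimately show ?thesis
    by simp
qed

lemma (in vec_space) rank_eq_card_nonzero_cols:
  assumes A: "A \<in> carrier_mat n nc" and indpt: "lin_indpt (set (cols A) - {0\<^sub>v n})"
  shows "rank A = card (set (cols A) - {0\<^sub>v n})"
proof -
  have "maximal (set (cols A) - {0\<^sub>v n}) (\<lambda>T. T \<subseteq> set (cols A) \<and> lin_indpt T)"
    unfolding maximal_def
  proof (intro conjI allI impI)
    show "set (cols A) - {0\<^sub>v n} \<subseteq> set (cols A)"
      by blast
    show "lin_indpt (set (cols A) - {0\<^sub>v n})"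
      by (rule indpt)
    fix T assume T: "set (cols A) - {0\<^sub>v n} \<subseteq> T \<and> T \<subseteq> set (cols A) \<and> lin_indpt T"
    then have "T \<subseteq> carrier_vec n"
      using A cols_dim by blast
    then have "0\<^sub>v n \<notin> T"
      using T vs_zero_lin_dep by auto
    then show "T = set (cols A) - {0\<^sub>v n}"
      using T by auto
  qed
  then show ?thesis
    by (rule rank_card_indpt[OF A])
qed

lemma enum_set:
  assumes "finite S"
  shows "distinct (enum_set S)" "set (enum_set S) = S"
proof -
  have "\<exists>xs. distinct xs \<and> set xs = S"
    using finite_distinct_list[OF assms] by blast
  then have "distinct (enum_set S) \<and> set (enum_set S) = S"
    unfolding enum_set_def by (rule someI_ex)
  then show "distinct (enum_set S)" "set (enum_set S) = S"
    by auto
qed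

lemma length_enum_set: "finite S \<Longrightarrow> length (enum_set S) = card S"
  using enum_set distinct_card by metis

lemma cols_index_mat:
  assumes "finite C"
  shows "set (cols (index_mat R C f)) = (\<lambda>c. vec (card R) (\<lambda>i. f (enum_set R ! i) c)) ` C"
proof -
  have "set (cols (index_mat R C f)) =
      (\<lambda>j. vec (card R) (\<lambda>i. f (enum_set R ! i) (enum_set C ! j))) ` {0..<card C}"
    by (auto simp: cols_def index_mat_def col_def intro!: image_cong)
  also have "\<dots> = (\<lambda>c. vec (card R) (\<lambda>i. f (enum_set R ! i) c)) ` (\<lambda>j. enum_set C ! j) ` {0..<card C}"
    by (simp add: image_image)
  also have "(\<lambda>j. enum_set C ! j) ` {0..<card C} = C"
    using enum_set[OF assms] length_enum_set[OF assms] by (metis map_nth set_map set_upt)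
  finally show ?thesis .
qed

definition synd_vec :: "pauli set \<Rightarrow> pauli \<Rightarrow> real vec" where
  "synd_vec M e = vec (card M) (\<lambda>i. of_bool (symp (enum_set M ! i) e))"

lemma synd_vec_nth:
  assumes "finite M" "h \<in> M"
  obtains i where "i < card M" "\<And>e. synd_vec M e $ i = of_bool (symp h e)"
proof -
  obtain i where "i < card M" "enum_set M ! i = h"
    using enum_set[OF assms(1)] length_enum_set[OF assms(1)] assms(2) by (metis in_set_conv_nth)
  then show ?thesis
    using that by (simp add: synd_vec_def)
qed

lemma synd_vec_eq_iff:
  assumes "finite M"
  shows "synd_vec M e = synd_vec M e' \<longleftrightarrow> (\<forall>h\<in>M. symp h e = symp h e')"
proof
  assume "synd_vec M e = synd_vec M e'"
  then have "\<forall>i<card M. symp (enum_set M ! i) e = symp (enum_set M ! i) e'"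
    by (auto simp: synd_vec_def vec_eq_iff)
  then show "\<forall>h\<in>M. symp h e = symp h e'"
    using enum_set[OF assms] length_enum_set[OF assms] by (metis in_set_conv_nth)
next
  assume "\<forall>h\<in>M. symp h e = symp h e'"
  then show "synd_vec M e = synd_vec M e'"
    using enum_set[OF assms] length_enum_set[OF assms] by (auto simp: synd_vec_def vec_eq_iff)
qed

lemma synd_vec_eq_0_iff:
  assumes "finite M"
  shows "synd_vec M e = 0\<^sub>v (card M) \<longleftrightarrow> (\<forall>h\<in>M. \<not> symp h e)"
proof -
  have "0\<^sub>v (card M) = synd_vec M pid"
    by (simp add: synd_vec_def not_symp_pid vec_eq_iff)
  then show ?thesis
    using synd_vec_eq_iff[OF assms, of e pid] by (simp add: not_symp_pid)
qed

context
  fixes k :: nat and M :: "pauli set"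
  assumes M: "pauli_subgroup k M"
begin

interpretation vec_space "TYPE(real)" "card M" .

lemma lin_indpt_synd_vecs:
  assumes S: "finite S" "S \<subseteq> range (synd_vec M) - {0\<^sub>v (card M)}"
  shows "lin_indpt S"
proof
  assume "lin_dep S"
  moreover have S_carrier: "S \<subseteq> carrier_vec (card M)"
    using S by (auto simp: synd_vec_def)
  ultimately obtain a w where a: "lincomb a S = 0\<^sub>v (card M)" "w \<in> S" "a w \<noteq> 0"
    using finite_lin_dep[OF S(1)] by auto
  define err where "err v = (SOME e. v = synd_vec M e)" for v
  have err: "synd_vec M (err v) = v" if "v \<in> S" for v
    using S that unfolding err_def by (metis (mono_tags) imageE someI_ex subsetD DiffD1)
  have fin: "finite M"
    using M by (rule finite_pauli_subgroup)
  have "a w = 0"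
  proof (rule coeff_eq_0_if_syndrome_combination_eq_0[OF M S(1) _ _ _ a(2)])
    show "\<exists>h\<in>M. symp h (err v) \<noteq> symp h (err w)" if "v \<in> S" "w \<in> S" "v \<noteq> w" for v w
    proof -
      have "synd_vec M (err v) \<noteq> synd_vec M (err w)"
        using that err by simp
      then show ?thesis
        using synd_vec_eq_iff[OF fin] by blast
    qed
    show "\<exists>h\<in>M. symp h (err v)" if "v \<in> S" for v
    proof -
      have "synd_vec M (err v) \<noteq> 0\<^sub>v (card M)"
        using that err S(2) by auto
      then show ?thesis
        using synd_vec_eq_0_iff[OF fin] by blast
    qed
    show "(\<Sum>v\<in>S. a v * of_bool (symp h (err v))) = 0" if h: "h \<in> M" for h
    proof -
      obtain i where i: "i < card M" "\<And>e. synd_vec M e $ i = of_bool (symp h e)"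
        using synd_vec_nth[OF fin h] by metis
      have "v $ i = of_bool (symp h (err v))" if "v \<in> S" for v
        using err[OF that] i(2)[of "err v"] by simp
      then have "(\<Sum>v\<in>S. a v * of_bool (symp h (err v))) = (\<Sum>v\<in>S. a v * v $ i)"
        by simp
      also have "\<dots> = lincomb a S $ i"
        using lincomb_index[OF i(1) S_carrier] by simp
      finally show ?thesis
        using a(1) i(1) by simp
    qed
  qed
  with a(3) show False ..
qed

lemma mat_rank_eq_card_nonzero_synd_cols:
  assumes A: "A \<in> carrier_mat (card M) nc"
    and cols: "set (cols A) \<subseteq> range (synd_vec M)"
  shows "mat_rank A = card (set (cols A) - {0\<^sub>v (card M)})"
proof -
  have "lin_indpt (set (cols A) - {0\<^sub>v (card M)})"
    using cols by (intro lin_indpt_synd_vecs) auto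
  then show ?thesis
    using A rank_eq_card_nonzero_cols unfolding mat_rank_def by auto
qed

end

lemma bij_betw_rep_nontrivial_fibres:
  "bij_betw (\<lambda>c. f (SOME x. x \<in> c))
     {c \<in> (\<lambda>x. {y \<in> X. f y = f x}) ` X. \<forall>x\<in>c. f x \<noteq> z} (f ` X - {z})"
proof -
  let ?fibre = "\<lambda>x. {y \<in> X. f y = f x}"
  let ?rep = "\<lambda>c. f (SOME x. x \<in> c)"
  have rep: "?rep (?fibre x) = f x" if "x \<in> X" for x
    by (rule someI2[where a = x]) (use that in auto)
  have classes: "{c \<in> ?fibre ` X. \<forall>x\<in>c. f x \<noteq> z} = ?fibre ` {x \<in> X. f x \<noteq> z}"
    by force
  show ?thesis
    unfolding classes
  proof (rule bij_betw_imageI)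
    show "inj_on ?rep (?fibre ` {x \<in> X. f x \<noteq> z})"
    proof (rule inj_onI)
      fix c1 c2
      assume "c1 \<in> ?fibre ` {x \<in> X. f x \<noteq> z}" "c2 \<in> ?fibre ` {x \<in> X. f x \<noteq> z}"
        and eq: "?rep c1 = ?rep c2"
      then obtain x1 x2 where x: "x1 \<in> X" "x2 \<in> X" and c: "c1 = ?fibre x1" "c2 = ?fibre x2"
        by blast
      have "f x1 = f x2"
        using eq unfolding c rep[OF x(1)] rep[OF x(2)] .
      then show "c1 = c2"
        unfolding c by simp
    qed
    have "?rep ` ?fibre ` {x \<in> X. f x \<noteq> z} = f ` {x \<in> X. f x \<noteq> z}"
      unfolding image_image using rep by (intro image_cong) auto
    also have "\<dots> = f ` X - {z}"
      by blast
    finally show "?rep ` ?fibre ` {x \<in> X. f x \<noteq> z} = f ` X - {z}" .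
  qed
qed
lemma syndrome_eq_iff_synd_vec_eq:
  assumes "finite M"
  shows "syndrome M e = syndrome M e' \<longleftrightarrow> synd_vec M e = synd_vec M e'"
  unfolding synd_vec_eq_iff[OF assms] syndrome_def
  by (auto simp: restrict_def fun_eq_iff symp_commute[of e] symp_commute[of e'] split: if_splits)

lemma syndrome_trivial_iff_synd_vec_eq_0:
  assumes "finite M"
  shows "syndrome M e = (\<lambda>h\<in>M. False) \<longleftrightarrow> synd_vec M e = 0\<^sub>v (card M)"
  unfolding synd_vec_eq_0_iff[OF assms] syndrome_def
  by (auto simp: restrict_def fun_eq_iff symp_commute[of e] split: if_splits)

lemma nontrivial_classes_eq_fibres:
  assumes "finite M"
  shows "nontrivial_classes M X op =
    {c \<in> (\<lambda>x. {y \<in> X. synd_vec M (op y) = synd_vec M (op x)}) ` X.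
       \<forall>x\<in>c. synd_vec M (op x) \<noteq> 0\<^sub>v (card M)}"
  unfolding nontrivial_classes_def syndrome_classes_def
    syndrome_eq_iff_synd_vec_eq[OF assms] syndrome_trivial_iff_synd_vec_eq_0[OF assms] ..

lemma bij_betw_rep_nontrivial_classes:
  assumes "finite M"
  shows "bij_betw (\<lambda>c. synd_vec M (op (SOME x. x \<in> c)))
    (nontrivial_classes M X op) (synd_vec M ` op ` X - {0\<^sub>v (card M)})"
  using bij_betw_rep_nontrivial_fibres[of "\<lambda>x. synd_vec M (op x)" X "0\<^sub>v (card M)"]
  unfolding nontrivial_classes_eq_fibres[OF assms] image_image .

lemma cols_synd_mat: "finite X \<Longrightarrow> set (cols (synd_mat M X op)) = synd_vec M ` op ` X"
  unfolding synd_mat_def by (auto simp: cols_index_mat synd_vec_def)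

lemma cols_red_mat:
  assumes "finite M" "finite X"
  shows "set (cols (red_mat M X op)) = synd_vec M ` op ` X - {0\<^sub>v (card M)}"
proof -
  have "finite (nontrivial_classes M X op)"
    unfolding nontrivial_classes_eq_fibres[OF assms(1)] using assms(2) by simp
  then have "set (cols (red_mat M X op)) =
      (\<lambda>c. synd_vec M (op (SOME x. x \<in> c))) ` nontrivial_classes M X op"
    unfolding red_mat_def by (simp add: cols_index_mat synd_vec_def)
  then show ?thesis
    using bij_betw_imp_surj_on[OF bij_betw_rep_nontrivial_classes[OF assms(1)]] by simp
qed

lemma mat_rank_synd_mat:
  assumes "pauli_subgroup k M" "finite X"
  shows "mat_rank (synd_mat M X op) = card (synd_vec M ` op ` X - {0\<^sub>v (card M)})"
proof -
  have "synd_mat M X op \<in> carrier_mat (card M) (card X)"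
    by (simp add: synd_mat_def index_mat_def)
  moreover have "set (cols (synd_mat M X op)) \<subseteq> range (synd_vec M)"
    using cols_synd_mat[OF assms(2)] by auto
  ultimately show ?thesis
    using cols_synd_mat[OF assms(2)] by (simp add: mat_rank_eq_card_nonzero_synd_cols[OF assms(1)])
qed

lemma mat_rank_red_mat:
  assumes "pauli_subgroup k M" "finite X"
  shows "mat_rank (red_mat M X op) = card (synd_vec M ` op ` X - {0\<^sub>v (card M)})"
proof -
  have cols: "set (cols (red_mat M X op)) = synd_vec M ` op ` X - {0\<^sub>v (card M)}"
    using cols_red_mat[OF finite_pauli_subgroup[OF assms(1)] assms(2)] .
  have "red_mat M X op \<in> carrier_mat (card M) (card (nontrivial_classes M X op))"
    by (simp add: red_mat_def index_mat_def)
  moreover have "set (cols (red_mat M X op)) \<subseteq> range (synd_vec M)"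
    unfolding cols by auto
  ultimately show ?thesis
    using cols by (simp add: mat_rank_eq_card_nonzero_synd_cols[OF assms(1)])
qed

theorem lemma3:
  fixes n :: nat and \<Gamma> :: "nat set set" and M :: "pauli set"
  assumes "finite \<Gamma>"
    and "\<forall>\<gamma>\<in>\<Gamma>. \<gamma> \<subseteq> {1..n}"
    and "pauli_subgroup n M"
  shows "mat_rank (synd_mat M (Ebar_Gamma n \<Gamma>) id) = card (nontrivial_classes M (E_Gamma n \<Gamma>) snd)
       \<and> mat_rank (red_mat M (Ebar_Gamma n \<Gamma>) id) = card (nontrivial_classes M (E_Gamma n \<Gamma>) snd)
       \<and> mat_rank (synd_mat M (E_Gamma n \<Gamma>) snd) = card (nontrivial_classes M (E_Gamma n \<Gamma>) snd)
       \<and> mat_rank (red_mat M (E_Gamma n \<Gamma>) snd) = card (nontrivial_classes M (E_Gamma n \<Gamma>) snd)"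
proof -
  let ?E = "E_Gamma n \<Gamma>"
  have "E_sup n \<gamma> \<subseteq> pauli_group n" for \<gamma>
    by (auto simp: E_sup_def)
  then have "finite (E_sup n \<gamma>)" for \<gamma>
    using finite_pauli_group finite_subset by blast
  then have fin_E: "finite ?E"
    unfolding E_Gamma_def using assms(1) by blast
  then have fin_Ebar: "finite (snd ` ?E)"
    by simp
  have Ebar: "Ebar_Gamma n \<Gamma> = snd ` ?E"
    by (force simp: E_Gamma_def Ebar_Gamma_def)
  have "card (nontrivial_classes M ?E snd) = card (synd_vec M ` snd ` ?E - {0\<^sub>v (card M)})"
    using bij_betw_same_card[OF bij_betw_rep_nontrivial_classes[OF finite_pauli_subgroup[OF assms(3)]]] .
  then show ?thesis
    using mat_rank_synd_mat[OF assms(3) fin_Ebar, of id] mat_rank_red_mat[OF assms(3) fin_Ebar, of id]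
      mat_rank_synd_mat[OF assms(3) fin_E, of snd] mat_rank_red_mat[OF assms(3) fin_E, of snd]
    unfolding Ebar by simp
qed

end
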